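(* Assume the setting of the context and suppose Assumption (A5) holds. Then for any compact interval $I\subset(0,\infty)$, \[\limsup_{n\rightarrow \infty}\sup_{t\in I}\alpha(n)^{-\kappa}h_{G^n}^{-1}(\gamma(n)t)<\infty.\]
   Context: Let $(E,d_E)$ be a metric space and $F\subseteq E$ such that $F\cap\overline{B}_E(x,r)$ is compact for all $x\in E$, $r>0$ ($\overline{B}_E$, $B_E$ closed and open balls in $E$). Let $d_F:=d_E|_{F\times F}$, $\rho\in F$, and $\nu$ a Radon measure of full support on $(F,d_F)$ (extended to $E$ by $\nu(A):=\nu(A\cap F)$). For a locally finite connected graph $G$ with at least two vertices and distinguished vertex $\rho(G)$: $d_G$ is the shortest-path metric, $B_G(x,r)$ the open $d_G$-ball; $\mu^G$ a symmetric weight with $\mu^G_{xy}>0$ iff $\{x,y\}$ is an edge; $\mu^G_x:=\sum_y\mu^G_{xy}$; $\nu^G(A):=\sum_{x\in A}\mu^G_x$; $P_G(x,y)=\mu^G_{xy}/\mu^G_x$; generator $\mathcal{L}_Gf(x)=\sum_yP_G(x,y)(f(y)-f(x))$; $(f,g)_G:=\sum_xf(x)g(x)\nu^G(\{x\})$; $\mathcal{E}_G(f,g):=-(\mathcal{L}_Gf,g)_G$ on $\mathcal{F}_G:=\{f:\mathcal{E}_G(f,f)<\infty\}$; resistance metric $R_G(x,y):=\sup\{|f(x)-f(y)|^2/\mathcal{E}_G(f,f):f\in\mathcal{F}_G,\mathcal{E}_G(f,f)>0\}$; $V_G(r):=\nu^G(\{x:R_G(\rho(G),x)\le r\})$, $h_G(r):=rV_G(r)$,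 $h_G^{-1}(m):=\sup\{r:h_G(r)\le m\}$. $(G^n)_{n\ge1}$ are such graphs with $V(G^n)\subseteq E$, $\rho(G^n)=\rho$; $\nu^n:=\nu^{G^n}$. $(\alpha(n)),(\beta(n)),(\gamma(n))$ are non-negative sequences diverging to $\infty$. Assumption (A5): (i) there is $c>0$ with $d_{G^n}(x,y)\ge c\alpha(n)d_E(x,y)$ for all $x,y\in V(G^n)$, $n\ge1$, and a non-negative $\tilde\alpha(n)=o(\alpha(n))$ such that for each $r>0$ there are $c'<\infty$, $n_0$ with $d_{G^n}(x,y)\le c'\alpha(n)d_E(x,y)+\tilde\alpha(n)$ for all $x,y\in V(G^n)\cap B_E(\rho,r)$, $n\ge n_0$; (ii) for every $x\in F$, $r>0$, $\lim_n\beta(n)^{-1}\nu^n(B_E(x,r))=\nu(B_E(x,r))$; (iii) for some $\kappa\in(0,\infty)$ there exist constants $c_1,c_2,c_3\in(0,\infty)$ and an integer $n_0$ such that $R_{G^n}(x,y)\le c_1d_{G^n}(x,y)^\kappa$ for all $x,y\in V(G^n)$, and $c_2\gamma(n)\le\alpha(n)^\kappa\beta(n)\le c_3\gamma(n)$, for all $n\ge n_0$. *)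

theory Defs
  imports "HOL-Analysis.Analysis" "HOL-Library.Landau_Symbols"
begin

definition adj :: "('e \<Rightarrow> 'e \<Rightarrow> real) \<Rightarrow> 'e \<Rightarrow> 'e \<Rightarrow> bool" where
  "adj mu x y \<longleftrightarrow> 0 < mu x y"

definition weighted_graph :: "'e set \<Rightarrow> ('e \<Rightarrow> 'e \<Rightarrow> real) \<Rightarrow> bool" where
  "weighted_graph V mu \<longleftrightarrow>
     (\<forall>x y. mu x y = mu y x) \<and>
     (\<forall>x y. 0 \<le> mu x y) \<and>
     (\<forall>x y. 0 < mu x y \<longrightarrow> x \<in> V \<and> y \<in> V \<and> x \<noteq> y) \<and>
     (\<forall>x\<in>V. finite {y. 0 < mu x y}) \<and>
     (\<forall>x\<in>V. \<forall>y\<in>V. \<exists>k. (adj mu ^^ k) x y) \<and>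
     (\<exists>x\<in>V. \<exists>y\<in>V. x \<noteq> y)"

definition gdist :: "('e \<Rightarrow> 'e \<Rightarrow> real) \<Rightarrow> 'e \<Rightarrow> 'e \<Rightarrow> real" where
  "gdist mu x y = real (LEAST k. (adj mu ^^ k) x y)"

definition vweight :: "('e \<Rightarrow> 'e \<Rightarrow> real) \<Rightarrow> 'e \<Rightarrow> real" where
  "vweight mu x = (\<Sum>y\<in>{y. 0 < mu x y}. mu x y)"

definition gmeasure :: "'e set \<Rightarrow> ('e \<Rightarrow> 'e \<Rightarrow> real) \<Rightarrow> 'e set \<Rightarrow> ennreal" where
  "gmeasure V mu A = (\<integral>\<^sup>+ x. ennreal (vweight mu x) \<partial>count_space (A \<inter> V))"

definition energy :: "'e set \<Rightarrow> ('e \<Rightarrow> 'e \<Rightarrow> real) \<Rightarrow> ('e \<Rightarrow> real) \<Rightarrow> ennreal" where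
  "energy V mu f =
     (\<integral>\<^sup>+ x. (\<integral>\<^sup>+ y. ennreal (mu x y * (f x - f y)\<^sup>2) \<partial>count_space V) \<partial>count_space V) / 2"

definition resist :: "'e set \<Rightarrow> ('e \<Rightarrow> 'e \<Rightarrow> real) \<Rightarrow> 'e \<Rightarrow> 'e \<Rightarrow> real" where
  "resist V mu x y =
     Sup {\<bar>f x - f y\<bar>\<^sup>2 / enn2real (energy V mu f) | f. energy V mu f < top \<and> 0 < energy V mu f}"

definition rvol :: "'e set \<Rightarrow> ('e \<Rightarrow> 'e \<Rightarrow> real) \<Rightarrow> 'e \<Rightarrow> real \<Rightarrow> ennreal" where
  "rvol V mu \<rho> r = gmeasure V mu {x \<in> V. resist V mu \<rho> x \<le> r}"

definition hfun :: "'e set \<Rightarrow> ('e \<Rightarrow> 'e \<Rightarrow> real) \<Rightarrow> 'e \<Rightarrow> real \<Rightarrow> ennreal" where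
  "hfun V mu \<rho> r = ennreal r * rvol V mu \<rho> r"

definition hinv :: "'e set \<Rightarrow> ('e \<Rightarrow> 'e \<Rightarrow> real) \<Rightarrow> 'e \<Rightarrow> real \<Rightarrow> real" where
  "hinv V mu \<rho> m = Sup {r. 0 \<le> r \<and> hfun V mu \<rho> r \<le> ennreal m}"

end

theory Submission
  imports Defs
begin

text \<open>Full support gives \<open>\<nu>(B(\<rho>, 1)) > q\<close> for some \<open>q > 0\<close>. By (A5)(i) the vertices of
  \<open>G\<^sup>n\<close> in this ball lie within graph distance \<open>O(\<alpha>(n))\<close> of \<open>\<rho>\<close>, hence by (A5)(iii) within
  resistance \<open>C \<alpha>(n)^\<kappa>\<close>, and by (A5)(ii) they carry graph mass at least \<open>\<beta>(n) q\<close> for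
  large \<open>n\<close>. So \<open>V(C \<alpha>(n)^\<kappa>) \<ge> \<beta>(n) q\<close>, and since \<open>\<alpha>(n)^\<kappa> \<beta>(n) \<ge> c\<^sub>2 \<gamma>(n)\<close>, every
  \<open>r > M \<alpha>(n)^\<kappa>\<close> with \<open>M\<close> large has \<open>h(r) > \<gamma>(n) b\<close>. Thus \<open>h\<^sup>-\<^sup>1(\<gamma>(n) t) \<le> M \<alpha>(n)^\<kappa>\<close>
  uniformly for \<open>t \<in> [a, b]\<close>.\<close>

lemma ennreal_obtain_real_less:
  fixes x :: ennreal
  assumes "0 < x"
  obtains q where "0 < q" "ennreal q < x"
proof -
  obtain y where y: "0 < y" "y < x" using dense[OF assms] by blast
  then have "y < top" using order_less_le_trans top_greatest by blast
  with y show ?thesis by (intro that[of "enn2real y"]) (simp_all add: enn2real_positive_iff)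
qed

lemma gmeasure_mono:
  assumes "A \<inter> V \<subseteq> B"
  shows "gmeasure V mu A \<le> gmeasure V mu B"
proof -
  have "gmeasure V mu A = (\<integral>\<^sup>+ x. ennreal (vweight mu x) * indicator (A \<inter> V) x \<partial>count_space UNIV)"
    unfolding gmeasure_def by (rule nn_integral_count_space_indicator) (simp add: NO_MATCH_def)
  also have "\<dots> \<le> (\<integral>\<^sup>+ x. ennreal (vweight mu x) * indicator (B \<inter> V) x \<partial>count_space UNIV)"
    by (intro nn_integral_mono mult_left_mono) (use assms in \<open>auto simp: indicator_def\<close>)
  also have "\<dots> = gmeasure V mu B"
    unfolding gmeasure_def by (rule nn_integral_count_space_indicator[symmetric]) (simp add: NO_MATCH_def)
  finally show ?thesis .
qed

lemma rvol_mono: "s \<le> r \<Longrightarrow> rvol V mu \<rho> s \<le> rvol V mu \<rho> r"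
  unfolding rvol_def by (rule gmeasure_mono) auto

lemma gmeasure_le_rvol:
  assumes "\<forall>x\<in>V \<inter> A. resist V mu \<rho> x \<le> s"
  shows "gmeasure V mu A \<le> rvol V mu \<rho> s"
  unfolding rvol_def by (rule gmeasure_mono) (use assms in auto)

lemma hinv_le_of_rvol_ge:
  assumes "0 \<le> m" "0 < q" "ennreal q \<le> rvol V mu \<rho> s" "s \<le> R" "m \<le> R * q"
  shows "hinv V mu \<rho> m \<le> R"
  unfolding hinv_def
proof (rule cSup_least)
  have "hfun V mu \<rho> 0 = 0" unfolding hfun_def by simp
  then show "{r. 0 \<le> r \<and> hfun V mu \<rho> r \<le> ennreal m} \<noteq> {}" by force
next
  fix r assume "r \<in> {r. 0 \<le> r \<and> hfun V mu \<rho> r \<le> ennreal m}"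
  hence r: "0 \<le> r" "hfun V mu \<rho> r \<le> ennreal m" by auto
  show "r \<le> R"
  proof (rule ccontr)
    assume "\<not> r \<le> R"
    hence "R < r" by simp
    have "ennreal (r * q) = ennreal r * ennreal q" using r assms by (simp add: ennreal_mult)
    also have "\<dots> \<le> ennreal r * rvol V mu \<rho> s" using assms by (intro mult_left_mono) auto
    also have "\<dots> \<le> ennreal r * rvol V mu \<rho> r"
      using assms \<open>R < r\<close> by (intro mult_left_mono rvol_mono) auto
    also have "\<dots> \<le> ennreal m" using r(2) by (simp add: hfun_def)
    finally have "r * q \<le> m" using assms by (simp add: ennreal_le_iff)
    moreover have "R * q < r * q" using \<open>R < r\<close> assms by simp
    ultimately show False using assms by linarith
  qed
qed

lemma scaled_hinv_le:
  fixes \<alpha> \<beta> \<gamma> \<kappa> q c2 C t b :: real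
  assumes "0 < \<alpha>" "0 < \<beta>" "0 < q" "0 < c2" "0 \<le> \<gamma>" "0 \<le> t" "t \<le> b"
    and scale: "c2 * \<gamma> \<le> \<alpha> powr \<kappa> * \<beta>"
    and vol: "ennreal (\<beta> * q) \<le> rvol V mu \<rho> (C * \<alpha> powr \<kappa>)"
  shows "\<alpha> powr (-\<kappa>) * hinv V mu \<rho> (\<gamma> * t) \<le> max C (b / (c2 * q))"
proof -
  define M where "M = max C (b / (c2 * q))"
  have A: "0 < \<alpha> powr \<kappa>" using assms by simp
  have "\<gamma> * t \<le> \<gamma> * b" using assms by (intro mult_left_mono) auto
  also have "\<dots> = (b / (c2 * q)) * (c2 * \<gamma>) * q" using assms by (simp add: field_simps)
  also have "\<dots> \<le> (b / (c2 * q)) * (\<alpha> powr \<kappa> * \<beta>) * q"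
    using assms scale by (intro mult_right_mono mult_left_mono) auto
  also have "\<dots> = (b / (c2 * q)) * (\<alpha> powr \<kappa> * (\<beta> * q))" by (simp add: ac_simps)
  also have "\<dots> \<le> M * (\<alpha> powr \<kappa> * (\<beta> * q))"
    using assms A unfolding M_def by (intro mult_right_mono) auto
  also have "\<dots> = (M * \<alpha> powr \<kappa>) * (\<beta> * q)" by (simp add: ac_simps)
  finally have "hinv V mu \<rho> (\<gamma> * t) \<le> M * \<alpha> powr \<kappa>"
    using assms A by (intro hinv_le_of_rvol_ge[OF _ _ vol]) (auto simp: M_def mult_right_mono)
  hence "\<alpha> powr (-\<kappa>) * hinv V mu \<rho> (\<gamma> * t) \<le> \<alpha> powr (-\<kappa>) * (M * \<alpha> powr \<kappa>)"
    by (intro mult_left_mono) auto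
  also have "\<dots> = M * (\<alpha> powr (-\<kappa>) * \<alpha> powr \<kappa>)" by (simp add: ac_simps)
  also have "\<alpha> powr (-\<kappa>) * \<alpha> powr \<kappa> = 1"
    using assms by (simp add: powr_add[symmetric])
  finally show ?thesis by (simp add: M_def)
qed

lemma eventually_ennreal_mult_le_of_tendsto:
  fixes X :: "nat \<Rightarrow> ennreal"
  assumes "(\<lambda>n. ennreal (inverse (\<beta> n)) * X n) \<longlonglongrightarrow> l" "ennreal q < l" "0 \<le> q"
    and "\<forall>\<^sub>F n in sequentially. 0 < \<beta> n"
  shows "\<forall>\<^sub>F n in sequentially. ennreal (\<beta> n * q) \<le> X n"
  using order_tendstoD(1)[OF assms(1,2)] assms(4)
proof eventually_elim
  case (elim n)
  have "ennreal (\<beta> n * q) = ennreal (\<beta> n) * ennreal q"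
    using elim assms(3) by (simp add: ennreal_mult)
  also have "\<dots> \<le> ennreal (\<beta> n) * (ennreal (inverse (\<beta> n)) * X n)"
    using elim by (intro mult_left_mono) auto
  also have "\<dots> = X n"
  proof -
    have "ennreal (\<beta> n) * ennreal (inverse (\<beta> n)) = 1"
      using elim ennreal_mult[of "\<beta> n" "inverse (\<beta> n)"] by simp
    then show ?thesis by (metis mult.assoc mult_1)
  qed
  finally show ?case .
qed

lemma powr_le_of_affine_bound:
  fixes g c \<alpha> \<alpha>' d r \<kappa> c1 :: real
  assumes "0 \<le> g" "g \<le> c * \<alpha> * d + \<alpha>'" "\<alpha>' \<le> \<alpha>" "0 \<le> \<alpha>" "0 \<le> d" "d \<le> r"
    and "0 < \<kappa>" "0 \<le> c1"
  shows "c1 * g powr \<kappa> \<le> c1 * (\<bar>c\<bar> * r + 1) powr \<kappa> * \<alpha> powr \<kappa>"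
proof -
  have "c * \<alpha> * d \<le> \<bar>c\<bar> * \<alpha> * d" using assms by (meson abs_ge_self mult_right_mono)
  also have "\<dots> \<le> \<bar>c\<bar> * \<alpha> * r" using assms by (intro mult_left_mono) auto
  finally have "c * \<alpha> * d \<le> \<bar>c\<bar> * \<alpha> * r" .
  hence "g \<le> (\<bar>c\<bar> * r + 1) * \<alpha>" using assms by (simp add: algebra_simps)
  hence "g powr \<kappa> \<le> ((\<bar>c\<bar> * r + 1) * \<alpha>) powr \<kappa>" using assms by (intro powr_mono2) auto
  also have "\<dots> = (\<bar>c\<bar> * r + 1) powr \<kappa> * \<alpha> powr \<kappa>"
    using assms by (simp add: powr_mult add_nonneg_nonneg)
  finally show ?thesis using assms by (simp add: mult_left_mono mult.assoc)
qed

lemma eventually_resist_le_on_ball: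
  fixes \<alpha> \<alpha>' :: "nat \<Rightarrow> real"
  assumes "\<alpha>' \<in> o(\<alpha>)" "\<forall>\<^sub>F n in sequentially. 0 < \<alpha> n" "0 < \<kappa>" "0 \<le> c1"
    and root: "\<forall>n\<ge>1. \<rho> \<in> V n"
    and gdist_le: "\<forall>n\<ge>n1. \<forall>x\<in>V n \<inter> ball \<rho> r. \<forall>y\<in>V n \<inter> ball \<rho> r.
                     gdist (\<mu> n) x y \<le> c * \<alpha> n * dist x y + \<alpha>' n"
    and resist_le: "\<forall>n\<ge>n0. \<forall>x\<in>V n. \<forall>y\<in>V n. resist (V n) (\<mu> n) x y \<le> c1 * gdist (\<mu> n) x y powr \<kappa>"
  shows "\<forall>\<^sub>F n in sequentially. \<forall>x\<in>V n \<inter> ball \<rho> r.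
           resist (V n) (\<mu> n) \<rho> x \<le> c1 * (\<bar>c\<bar> * r + 1) powr \<kappa> * \<alpha> n powr \<kappa>"
proof -
  have "\<forall>\<^sub>F n in sequentially. norm (\<alpha>' n) \<le> 1 * norm (\<alpha> n)"
    using landau_o.smallD[OF assms(1), of 1] by simp
  with assms(2) have "\<forall>\<^sub>F n in sequentially. \<alpha>' n \<le> \<alpha> n"
    by eventually_elim auto
  with assms(2) eventually_ge_at_top[of "max 1 (max n0 n1)"]
  show ?thesis
  proof eventually_elim
    case (elim n)
    show ?case
    proof
      fix x assume x: "x \<in> V n \<inter> ball \<rho> r"
      hence "0 < r" by (metis IntD2 mem_ball zero_le_dist le_less_trans)
      hence "\<rho> \<in> V n \<inter> ball \<rho> r" using root elim by auto
      have "resist (V n) (\<mu> n) \<rho> x \<le> c1 * gdist (\<mu> n) \<rho> x powr \<kappa>"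
        using resist_le elim x \<open>\<rho> \<in> V n \<inter> ball \<rho> r\<close> by auto
      also have "\<dots> \<le> c1 * (\<bar>c\<bar> * r + 1) powr \<kappa> * \<alpha> n powr \<kappa>"
        using gdist_le elim x \<open>\<rho> \<in> V n \<inter> ball \<rho> r\<close> assms(3,4)
        by (intro powr_le_of_affine_bound[where d = "dist \<rho> x" and \<alpha>' = "\<alpha>' n"]) (auto simp: gdist_def)
      finally show "resist (V n) (\<mu> n) \<rho> x \<le> c1 * (\<bar>c\<bar> * r + 1) powr \<kappa> * \<alpha> n powr \<kappa>" .
    qed
  qed
qed

lemma eventually_SUP_scaled_hinv_le:
  fixes \<alpha> \<beta> \<gamma> :: "nat \<Rightarrow> real"
  assumes "0 < q" "0 < c2" "0 \<le> a"
    and "\<forall>\<^sub>F n in sequentially. 0 < \<alpha> n \<and> 0 < \<beta> n \<and> 0 \<le> \<gamma> n"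
    and "\<forall>\<^sub>F n in sequentially. c2 * \<gamma> n \<le> \<alpha> n powr \<kappa> * \<beta> n"
    and "\<forall>\<^sub>F n in sequentially. ennreal (\<beta> n * q) \<le> rvol (V n) (\<mu> n) \<rho> (C * \<alpha> n powr \<kappa>)"
  shows "\<forall>\<^sub>F n in sequentially.
           (SUP t\<in>{a..b}. ereal (\<alpha> n powr (-\<kappa>) * hinv (V n) (\<mu> n) \<rho> (\<gamma> n * t)))
             \<le> ereal (max C (b / (c2 * q)))"
  using assms(4-6)
proof eventually_elim
  case (elim n)
  show ?case
  proof (rule SUP_least)
    fix t assume "t \<in> {a..b}"
    with elim assms(1-3) show "ereal (\<alpha> n powr (-\<kappa>) * hinv (V n) (\<mu> n) \<rho> (\<gamma> n * t))
        \<le> ereal (max C (b / (c2 * q)))"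
      unfolding ereal_less_eq(3) by (intro scaled_hinv_le[of _ "\<beta> n"]) auto
  qed
qed

theorem lemma4p5:
  fixes F :: "'e::metric_space set" and \<rho> :: 'e and \<nu> :: "'e measure"
    and V :: "nat \<Rightarrow> 'e set" and \<mu> :: "nat \<Rightarrow> 'e \<Rightarrow> 'e \<Rightarrow> real"
    and \<alpha> \<beta> \<gamma> :: "nat \<Rightarrow> real" and \<kappa> a b :: real
  assumes F_proper: "\<forall>x r. 0 < r \<longrightarrow> compact (F \<inter> cball x r)"
    and rho_F: "\<rho> \<in> F"
    and nu_sets: "sets \<nu> = sets borel"
    and nu_on_F: "\<forall>A\<in>sets borel. emeasure \<nu> A = emeasure \<nu> (A \<inter> F)"
    and nu_locally_finite: "\<forall>x\<in>F. \<exists>r>0. emeasure \<nu> (ball x r) < top"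
    and nu_inner_regular:
      "\<forall>A\<in>sets borel. emeasure \<nu> A = (SUP K\<in>{K. K \<subseteq> A \<and> compact K}. emeasure \<nu> K)"
    and nu_full_support: "\<forall>x\<in>F. \<forall>r>0. 0 < emeasure \<nu> (ball x r)"
    and graphs: "\<forall>n\<ge>1. weighted_graph (V n) (\<mu> n)"
    and root: "\<forall>n\<ge>1. \<rho> \<in> V n"
    and seq_nonneg: "\<forall>n\<ge>1. 0 \<le> \<alpha> n \<and> 0 \<le> \<beta> n \<and> 0 \<le> \<gamma> n"
    and alpha_div: "filterlim \<alpha> at_top sequentially"
    and beta_div: "filterlim \<beta> at_top sequentially"
    and gamma_div: "filterlim \<gamma> at_top sequentially"
    and A5_i_lower: "\<exists>c>0. \<forall>n\<ge>1. \<forall>x\<in>V n. \<forall>y\<in>V n.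
                        gdist (\<mu> n) x y \<ge> c * \<alpha> n * dist x y"
    and A5_i_upper: "\<exists>\<alpha>'::nat \<Rightarrow> real. (\<forall>n. 0 \<le> \<alpha>' n) \<and> \<alpha>' \<in> o(\<alpha>) \<and>
                        (\<forall>r>0. \<exists>c' n0. \<forall>n\<ge>n0. \<forall>x\<in>V n \<inter> ball \<rho> r. \<forall>y\<in>V n \<inter> ball \<rho> r.
                           gdist (\<mu> n) x y \<le> c' * \<alpha> n * dist x y + \<alpha>' n)"
    and A5_ii: "\<forall>x\<in>F. \<forall>r>0.
                  (\<lambda>n. ennreal (inverse (\<beta> n)) * gmeasure (V n) (\<mu> n) (ball x r))
                    \<longlonglongrightarrow> emeasure \<nu> (ball x r)"
    and kappa_pos: "0 < \<kappa>"
    and A5_iii: "\<exists>c1>0. \<exists>c2>0. \<exists>c3>0. \<exists>n0. \<forall>n\<ge>n0.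
                   (\<forall>x\<in>V n. \<forall>y\<in>V n. resist (V n) (\<mu> n) x y \<le> c1 * gdist (\<mu> n) x y powr \<kappa>) \<and>
                   c2 * \<gamma> n \<le> \<alpha> n powr \<kappa> * \<beta> n \<and> \<alpha> n powr \<kappa> * \<beta> n \<le> c3 * \<gamma> n"
    and I_pos: "0 < a" and I_le: "a \<le> b"
  shows "limsup (\<lambda>n. SUP t\<in>{a..b}. ereal (\<alpha> n powr (-\<kappa>) * hinv (V n) (\<mu> n) \<rho> (\<gamma> n * t)))
           < \<infinity>"
proof -
  obtain q where q: "0 < q" "ennreal q < emeasure \<nu> (ball \<rho> 1)"
    using ennreal_obtain_real_less nu_full_support rho_F zero_less_one by blast
  obtain \<alpha>' c n1 where \<alpha>': "\<alpha>' \<in> o(\<alpha>)"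
    and gdist_le: "\<forall>n\<ge>n1. \<forall>x\<in>V n \<inter> ball \<rho> 1. \<forall>y\<in>V n \<inter> ball \<rho> 1.
                     gdist (\<mu> n) x y \<le> c * \<alpha> n * dist x y + \<alpha>' n"
    using A5_i_upper by (meson zero_less_one)
  obtain c1 c2 n0 where c: "0 < c1" "0 < c2" and iii: "\<forall>n\<ge>n0.
      (\<forall>x\<in>V n. \<forall>y\<in>V n. resist (V n) (\<mu> n) x y \<le> c1 * gdist (\<mu> n) x y powr \<kappa>) \<and>
      c2 * \<gamma> n \<le> \<alpha> n powr \<kappa> * \<beta> n"
    using A5_iii by blast
  have resist_gdist: "\<forall>n\<ge>n0. \<forall>x\<in>V n. \<forall>y\<in>V n. resist (V n) (\<mu> n) x y \<le> c1 * gdist (\<mu> n) x y powr \<kappa>"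
    using iii by blast
  define C where "C = c1 * (\<bar>c\<bar> + 1) powr \<kappa>"
  have \<alpha>_pos: "\<forall>\<^sub>F n in sequentially. 0 < \<alpha> n"
    using alpha_div filterlim_at_top_dense by blast
  have \<beta>_pos: "\<forall>\<^sub>F n in sequentially. 0 < \<beta> n"
    using beta_div filterlim_at_top_dense by blast
  have \<gamma>_scale: "\<forall>\<^sub>F n in sequentially. 0 \<le> \<gamma> n \<and> c2 * \<gamma> n \<le> \<alpha> n powr \<kappa> * \<beta> n"
    using eventually_ge_at_top[of "max 1 n0"] by eventually_elim (use iii seq_nonneg in auto)
  have "\<forall>\<^sub>F n in sequentially. \<forall>x\<in>V n \<inter> ball \<rho> 1. resist (V n) (\<mu> n) \<rho> x \<le> C * \<alpha> n powr \<kappa>"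
    using eventually_resist_le_on_ball[OF \<alpha>' \<alpha>_pos kappa_pos less_imp_le[OF c(1)] root gdist_le
        resist_gdist] by (simp add: C_def)
  moreover have "\<forall>\<^sub>F n in sequentially. ennreal (\<beta> n * q) \<le> gmeasure (V n) (\<mu> n) (ball \<rho> 1)"
    using q(1) by (intro eventually_ennreal_mult_le_of_tendsto[OF A5_ii[rule_format, OF rho_F zero_less_one]
        q(2) _ \<beta>_pos]) simp
  ultimately have "\<forall>\<^sub>F n in sequentially. ennreal (\<beta> n * q) \<le> rvol (V n) (\<mu> n) \<rho> (C * \<alpha> n powr \<kappa>)"
    by eventually_elim (meson gmeasure_le_rvol order_trans)
  with \<alpha>_pos \<beta>_pos \<gamma>_scale q(1) c(2) I_pos
  have "\<forall>\<^sub>F n in sequentially.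
          (SUP t\<in>{a..b}. ereal (\<alpha> n powr (-\<kappa>) * hinv (V n) (\<mu> n) \<rho> (\<gamma> n * t)))
            \<le> ereal (max C (b / (c2 * q)))"
    by (intro eventually_SUP_scaled_hinv_le) (auto elim: eventually_mono simp: eventually_conj_iff)
  then have "limsup (\<lambda>n. SUP t\<in>{a..b}. ereal (\<alpha> n powr (-\<kappa>) * hinv (V n) (\<mu> n) \<rho> (\<gamma> n * t)))
               \<le> ereal (max C (b / (c2 * q)))"
    by (rule Limsup_bounded)
  also have "\<dots> < \<infinity>" by (rule ereal_less_PInfty) (rule PInfty_neq_ereal(1))
  finally show ?thesis .
qed

end
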